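(* Let $\lambda>0$, $\pi/4<\theta<\pi/2$, $T_\theta=[-\pi/2+\theta,\pi/2-\theta]$, and let $\{(\underline R_n,\underline\Phi_n,\overline R_n,\overline\Phi_n)\}_{n\ge1}$ be iid with the law of $(\underline R,\underline\Phi,\overline R,\overline\Phi)$. Define the Markov chain $M_0=0$ and, for $n\ge1$, $$M_n=(M_{n-1}-\lfloor\underline R_n\cos\theta\rfloor)_+\mathbb 1\{\underline\Phi_n\in T_\theta\}+\max\{M_{n-1},\lceil\overline R_n\rceil\}\mathbb 1\{\underline\Phi_n\notin T_\theta\},$$ and $\tau^M=\inf\{n>0:M_n=0\}$. Then there are $C,c>0$ such that $\mathbb P(\tau^M\ge n)\le Ce^{-cn}$ for all $n>0$.
   Context: $\mathcal P_\lambda$: homogeneous Poisson point process of intensity $\lambda$ on $\mathbb R^2$. Polar coordinates $(r_v,\varphi_v)$, $\varphi_v\in[-\pi,\pi)$ from $e_1=(1,0)$; for $\alpha\in(0,\pi/2)$, $\mathcal C_\alpha=\{v:r_v>0,|\varphi_v|\le\alpha\}$. $(\underline R,\underline\Phi)$ are the polar coordinates of $\arg\min\{|v|:v\in\mathcal C_\theta\cap\mathcal P_\lambda\}$ and $(\overline R,\overline\Phi)$ those of $\arg\min\{|v|:v\in\mathcal C_{\pi/2-\theta}\cap\mathcal P_\lambda\}$ (same process). $x_+=\max\{x,0\}$. *)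

theory Defs
  imports "HOL-Probability.Probability"
begin

text \<open>Points of the plane are complex numbers; polar angle is Arg (in (-pi,pi]),
  which agrees with the paper's convention [-pi,pi) on all cones used here.\<close>

definition poisson_point_process :: "'a measure \<Rightarrow> ('a \<Rightarrow> complex set) \<Rightarrow> real \<Rightarrow> bool" where
  "poisson_point_process M N lam \<longleftrightarrow>
     prob_space M \<and>
     (\<forall>\<omega>\<in>space M. \<forall>K. compact K \<longrightarrow> finite (N \<omega> \<inter> K)) \<and>
     (\<forall>A. A \<in> sets borel \<and> bounded A \<longrightarrow>
        (\<lambda>\<omega>. card (N \<omega> \<inter> A)) \<in> measurable M (count_space UNIV) \<and>
        (\<forall>k::nat. measure M {\<omega>\<in>space M. card (N \<omega> \<inter> A) = k} =
            exp (- (lam * measure lborel A)) * (lam * measure lborel A) ^ k / fact k)) \<and>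
     (\<forall>(I::nat set) A. finite I \<longrightarrow> disjoint_family_on A I \<longrightarrow>
        (\<forall>i\<in>I. A i \<in> sets borel \<and> bounded (A i)) \<longrightarrow>
        prob_space.indep_vars M (\<lambda>_. count_space UNIV) (\<lambda>i \<omega>. card (N \<omega> \<inter> A i)) I)"

definition cone :: "real \<Rightarrow> complex set" where
  "cone \<alpha> = {v. v \<noteq> 0 \<and> \<bar>Arg v\<bar> \<le> \<alpha>}"

definition nearest :: "complex set \<Rightarrow> complex" where
  "nearest S = (SOME v. v \<in> S \<and> (\<forall>w\<in>S. cmod v \<le> cmod w))"

text \<open>(R_low, Phi_low, R_up, Phi_up) computed from a point configuration P.\<close>
definition polar_pair :: "real \<Rightarrow> complex set \<Rightarrow> real \<times> real \<times> real \<times> real" where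
  "polar_pair \<theta> P =
     (let u = nearest (cone \<theta> \<inter> P); w = nearest (cone (pi/2 - \<theta>) \<inter> P)
      in (cmod u, Arg u, cmod w, Arg w))"

definition Tset :: "real \<Rightarrow> real set" where
  "Tset \<theta> = {-pi/2 + \<theta> .. pi/2 - \<theta>}"

fun Mchain :: "real \<Rightarrow> (nat \<Rightarrow> real \<times> real \<times> real \<times> real) \<Rightarrow> nat \<Rightarrow> int" where
  "Mchain \<theta> X 0 = 0"
| "Mchain \<theta> X (Suc n) =
     (case X (Suc n) of (r, \<phi>, rb, \<phi>b) \<Rightarrow>
        max (Mchain \<theta> X n - \<lfloor>r * cos \<theta>\<rfloor>) 0 * of_bool (\<phi> \<in> Tset \<theta>)
        + max (Mchain \<theta> X n) \<lceil>rb\<rceil> * of_bool (\<phi> \<notin> Tset \<theta>))"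

definition tauM :: "real \<Rightarrow> (nat \<Rightarrow> real \<times> real \<times> real \<times> real) \<Rightarrow> enat" where
  "tauM \<theta> X = (INF n \<in> {n. n > 0 \<and> Mchain \<theta> X n = 0}. enat n)"

end

theory Submission
  imports Defs
begin

text \<open>Fix a block length K and consider the potential max M_n K. A step with
  Phi_n outside T_theta raises it by at most the overshoot (ceil Rbar_n - K)_+, while K
  consecutive descent steps (Phi_n in T_theta and R_n cos theta \<ge> 1) lower it by one as long
  as M stays positive. Hence, before tau, the number of descent blocks is at most the total
  overshoot. A block consists of descent steps with probability at least q^K, where q > 0 is
  the probability that the Poisson process has a point in a small box close to the ray of
  angle 0 and none elsewhere nearby; and a void probability gives Rbar a Gaussian tail, so
  that an overshoot has exponential moment 1 + O(exp (-b K^2)). For K large, two Chernoff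
  bounds make both ways for tau \<ge> n to happen exponentially unlikely in n.\<close>

lemma Mchain_Suc_if:
  "Mchain \<theta> X (Suc n) = (if fst (snd (X (Suc n))) \<in> Tset \<theta>
     then max (Mchain \<theta> X n - \<lfloor>fst (X (Suc n)) * cos \<theta>\<rfloor>) 0
     else max (Mchain \<theta> X n) \<lceil>fst (snd (snd (X (Suc n))))\<rceil>)"
  by (cases "X (Suc n)") auto

lemma Mchain_nonneg: "0 \<le> Mchain \<theta> X n"
  by (induction n) (auto simp: Mchain_Suc_if simp del: Mchain.simps(2))

definition descent_region :: "real \<Rightarrow> (real \<times> real \<times> real \<times> real) set" where
  "descent_region \<theta> = {z. fst (snd z) \<in> Tset \<theta> \<and> 1 \<le> fst z * cos \<theta>}"

definition overshoot :: "nat \<Rightarrow> real \<times> real \<times> real \<times> real \<Rightarrow> int" where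
  "overshoot K z = max (\<lceil>fst (snd (snd z))\<rceil> - int K) 0"

lemma overshoot_nonneg: "0 \<le> overshoot K z"
  by (simp add: overshoot_def)

lemma max_Mchain_Suc_le:
  assumes "0 < cos \<theta>" "0 \<le> fst (X (Suc t))"
  shows "max (Mchain \<theta> X (Suc t)) (int K) \<le> max (Mchain \<theta> X t) (int K) + overshoot K (X (Suc t))"
proof -
  define d where "d = \<lfloor>fst (X (Suc t)) * cos \<theta>\<rfloor>"
  have "0 \<le> d" using assms unfolding d_def by simp
  then show ?thesis using Mchain_nonneg[of \<theta> X t]
    by (auto simp: Mchain_Suc_if overshoot_def simp flip: d_def simp del: Mchain.simps(2))
qed

lemma Mchain_Suc_le_pred_if_descent:
  assumes "X (Suc t) \<in> descent_region \<theta>" "Mchain \<theta> X (Suc t) \<noteq> 0"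
  shows "Mchain \<theta> X (Suc t) \<le> Mchain \<theta> X t - 1"
  using assms by (auto simp: descent_region_def Mchain_Suc_if simp del: Mchain.simps(2))

lemma max_Mchain_add_le:
  assumes "0 < cos \<theta>" "\<And>k. 0 \<le> fst (X k)"
  shows "max (Mchain \<theta> X (a + i)) (int K)
           \<le> max (Mchain \<theta> X a) (int K) + (\<Sum>t<i. overshoot K (X (Suc (a + t))))"
proof (induction i)
  case (Suc i)
  have "max (Mchain \<theta> X (Suc (a + i))) (int K)
          \<le> max (Mchain \<theta> X (a + i)) (int K) + overshoot K (X (Suc (a + i)))"
    using assms by (intro max_Mchain_Suc_le) auto
  then show ?case using Suc by (simp only: sum.lessThan_Suc add_Suc_right)
qed simp

lemma max_Mchain_descent_block:
  assumes descent: "\<forall>i<K. X (Suc (a + i)) \<in> descent_region \<theta>"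
    and nonzero: "\<forall>i<K. Mchain \<theta> X (Suc (a + i)) \<noteq> 0" and "1 \<le> K"
  shows "max (Mchain \<theta> X (a + K)) (int K) \<le> max (Mchain \<theta> X a) (int K) - 1"
proof -
  have decrease: "Mchain \<theta> X (a + i) \<le> Mchain \<theta> X a - int i" if "i \<le> K" for i
    using that
  proof (induction i)
    case (Suc i)
    then have "Mchain \<theta> X (Suc (a + i)) \<le> Mchain \<theta> X (a + i) - 1"
      using descent nonzero by (intro Mchain_Suc_le_pred_if_descent) auto
    then show ?case using Suc by simp
  qed simp
  obtain k where k: "K = Suc k" using \<open>1 \<le> K\<close> by (cases K) auto
  then have "Mchain \<theta> X (a + K) \<noteq> 0" using nonzero by auto
  then have "1 \<le> Mchain \<theta> X (a + K)" using Mchain_nonneg[of \<theta> X "a + K"] by simp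
  then show ?thesis using decrease[of K] \<open>1 \<le> K\<close> by simp
qed

lemma max_Mchain_block_le:
  assumes "0 < cos \<theta>" "\<And>k. 0 \<le> fst (X k)" "1 \<le> K"
    and nonzero: "\<forall>i<K. Mchain \<theta> X (Suc (a + i)) \<noteq> 0"
  shows "max (Mchain \<theta> X (a + K)) (int K) + of_bool (\<forall>i<K. X (Suc (a + i)) \<in> descent_region \<theta>)
           \<le> max (Mchain \<theta> X a) (int K) + (\<Sum>t<K. overshoot K (X (Suc (a + t))))"
proof (cases "\<forall>i<K. X (Suc (a + i)) \<in> descent_region \<theta>")
  case True
  then have "max (Mchain \<theta> X (a + K)) (int K) \<le> max (Mchain \<theta> X a) (int K) - 1"
    using nonzero \<open>1 \<le> K\<close> by (intro max_Mchain_descent_block)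
  moreover have "0 \<le> (\<Sum>t<K. overshoot K (X (Suc (a + t))))"
    by (intro sum_nonneg overshoot_nonneg)
  moreover have "of_bool (\<forall>i<K. X (Suc (a + i)) \<in> descent_region \<theta>) = (1::int)"
    using True by simp
  ultimately show ?thesis by linarith
next
  case False
  have "max (Mchain \<theta> X (a + K)) (int K)
          \<le> max (Mchain \<theta> X a) (int K) + (\<Sum>t<K. overshoot K (X (Suc (a + t))))"
    using assms(1,2) by (rule max_Mchain_add_le)
  moreover have "of_bool (\<forall>i<K. X (Suc (a + i)) \<in> descent_region \<theta>) = (0::int)"
    using False by simp
  ultimately show ?thesis by linarith
qed

lemma descent_blocks_le_overshoots:
  assumes "0 < cos \<theta>" "\<And>k. 0 \<le> fst (X k)" "1 \<le> K"
    and nonzero: "\<And>t. 0 < t \<Longrightarrow> t \<le> m * K \<Longrightarrow> Mchain \<theta> X t \<noteq> 0"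
  shows "(\<Sum>j<m. of_bool (\<forall>i<K. X (Suc (j * K + i)) \<in> descent_region \<theta>))
           \<le> (\<Sum>t<m * K. overshoot K (X (Suc t)))"
proof -
  have "max (Mchain \<theta> X (j * K)) (int K)
          + (\<Sum>j'<j. of_bool (\<forall>i<K. X (Suc (j' * K + i)) \<in> descent_region \<theta>))
        \<le> int K + (\<Sum>t<j * K. overshoot K (X (Suc t)))" if "j \<le> m" for j
    using that
  proof (induction j)
    case (Suc j)
    have "Suc (j * K + i) \<le> m * K" if "i < K" for i
      using Suc.prems that mult_le_mono1[of "Suc j" m K] by simp
    then have "max (Mchain \<theta> X (j * K + K)) (int K)
                 + of_bool (\<forall>i<K. X (Suc (j * K + i)) \<in> descent_region \<theta>)
               \<le> max (Mchain \<theta> X (j * K)) (int K) + (\<Sum>t<K. overshoot K (X (Suc (j * K + t))))"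
      using assms(1-3) nonzero by (intro max_Mchain_block_le) (auto simp del: Mchain.simps)
    moreover have "(\<Sum>t<j * K + i. overshoot K (X (Suc t)))
        = (\<Sum>t<j * K. overshoot K (X (Suc t))) + (\<Sum>t<i. overshoot K (X (Suc (j * K + t))))" for i
      by (induction i) simp_all
    ultimately show ?case using Suc by (simp add: add.commute add.left_commute)
  qed simp
  from this[of m] show ?thesis by linarith
qed

lemma Mchain_nonzero_before_tauM:
  assumes "enat n \<le> tauM \<theta> X" "0 < t" "t < n"
  shows "Mchain \<theta> X t \<noteq> 0"
proof
  assume "Mchain \<theta> X t = 0"
  then have "tauM \<theta> X \<le> enat t" unfolding tauM_def using \<open>0 < t\<close> by (intro INF_lower2[of t]) auto
  then show False using assms by (meson enat_ord_simps(2) leD order_trans)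
qed

lemma prod_indicator_lessThan:
  fixes K :: nat
  shows "(\<Prod>i<K. indicator S (f i) :: real) = of_bool (\<forall>i<K. f i \<in> S)"
  by (induction K) (auto simp: less_Suc_eq)

lemma descent_blocks_le_overshoots_before_tauM:
  assumes "enat n \<le> tauM \<theta> X" "m * K < n" "0 < cos \<theta>" "\<And>k. 0 \<le> fst (X k)" "1 \<le> K"
  shows "(\<Sum>j<m. \<Prod>i<K. indicator (descent_region \<theta>) (X (Suc (j * K + i))) :: real)
           \<le> (\<Sum>t<m * K. real_of_int (overshoot K (X (Suc t))))"
proof -
  have "(\<Sum>j<m. of_bool (\<forall>i<K. X (Suc (j * K + i)) \<in> descent_region \<theta>))
      \<le> (\<Sum>t<m * K. overshoot K (X (Suc t)))"
    using assms by (intro descent_blocks_le_overshoots Mchain_nonzero_before_tauM) auto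
  then have "real_of_int (\<Sum>j<m. of_bool (\<forall>i<K. X (Suc (j * K + i)) \<in> descent_region \<theta>))
      \<le> real_of_int (\<Sum>t<m * K. overshoot K (X (Suc t)))"
    by (simp only: of_int_le_iff)
  then show ?thesis by (simp add: prod_indicator_lessThan)
qed

lemma (in prob_space) prob_sum_ge_le_prod_mgf:
  fixes Y :: "'i \<Rightarrow> 'a \<Rightarrow> real"
  assumes indep: "indep_vars (\<lambda>_. borel) Y J" and "finite J"
    and mgf: "\<And>j. j \<in> J \<Longrightarrow> (\<integral>\<^sup>+\<omega>. ennreal (exp (Y j \<omega>)) \<partial>M) \<le> ennreal (B j)"
    and B: "\<And>j. j \<in> J \<Longrightarrow> 0 \<le> B j"
  shows "prob {\<omega>\<in>space M. s \<le> (\<Sum>j\<in>J. Y j \<omega>)} \<le> exp (- s) * (\<Prod>j\<in>J. B j)"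
proof -
  have [measurable]: "Y j \<in> borel_measurable M" if "j \<in> J" for j
    using indep that by (auto simp: indep_vars_def)
  have "(\<integral>\<^sup>+\<omega>. ennreal (exp (\<Sum>j\<in>J. Y j \<omega>)) * indicator (space M) \<omega> \<partial>M)
      = (\<integral>\<^sup>+\<omega>. (\<Prod>j\<in>J. ennreal (exp (Y j \<omega>))) \<partial>M)"
    by (intro nn_integral_cong) (simp add: exp_sum[OF \<open>finite J\<close>] prod_ennreal)
  also have "\<dots> = (\<Prod>j\<in>J. \<integral>\<^sup>+\<omega>. ennreal (exp (Y j \<omega>)) \<partial>M)"
    by (intro indep_vars_nn_integral \<open>finite J\<close> indep_vars_compose2[OF indep]) auto
  also have "\<dots> \<le> (\<Prod>j\<in>J. ennreal (B j))"
    by (intro prod_mono_ennreal mgf)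
  also have "\<dots> = ennreal (\<Prod>j\<in>J. B j)"
    using B by (simp add: prod_ennreal)
  finally have prod_mgf: "(\<integral>\<^sup>+\<omega>. ennreal (exp (\<Sum>j\<in>J. Y j \<omega>)) * indicator (space M) \<omega> \<partial>M)
      \<le> ennreal (\<Prod>j\<in>J. B j)" .
  have "emeasure M {\<omega>\<in>space M. s \<le> (\<Sum>j\<in>J. Y j \<omega>)}
      \<le> ennreal (exp (- 1 * s)) * (\<integral>\<^sup>+\<omega>. ennreal (exp (1 * (\<Sum>j\<in>J. Y j \<omega>))) * indicator (space M) \<omega> \<partial>M)"
    by (intro Chernoff_ineq_nn_integral_ge) auto
  also have "\<dots> \<le> ennreal (exp (- s)) * ennreal (\<Prod>j\<in>J. B j)"
    using prod_mgf by (simp add: mult_left_mono)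
  finally show ?thesis
    using B by (simp add: emeasure_eq_measure prod_nonneg flip: ennreal_mult)
qed

lemma (in prob_space) prob_sum_indicators_le:
  fixes X :: "'i \<Rightarrow> 'a \<Rightarrow> real"
  assumes indep: "indep_vars (\<lambda>_. borel) X J" and "finite J"
    and bernoulli: "\<And>j \<omega>. j \<in> J \<Longrightarrow> X j \<omega> \<in> {0, 1}"
    and p: "\<And>j. j \<in> J \<Longrightarrow> p \<le> prob {\<omega>\<in>space M. X j \<omega> = 1}"
  shows "prob {\<omega>\<in>space M. (\<Sum>j\<in>J. X j \<omega>) \<le> s} \<le> exp s * (1 - (1 - exp (-1)) * p) ^ card J"
proof -
  define c where "c = 1 - exp (-1::real)"
  have c: "0 \<le> c" "c \<le> 1" by (auto simp: c_def)
  define E where "E j = {\<omega>\<in>space M. X j \<omega> = 1}" for j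
  have [measurable]: "X j \<in> borel_measurable M" if "j \<in> J" for j
    using indep that by (auto simp: indep_vars_def)
  have E [measurable]: "E j \<in> events" if "j \<in> J" for j
    using that unfolding E_def by measurable
  have mgf: "(\<integral>\<^sup>+\<omega>. ennreal (exp (- X j \<omega>)) \<partial>M) \<le> ennreal (1 - c * prob (E j))" if j: "j \<in> J" for j
  proof -
    have "(\<integral>\<^sup>+\<omega>. ennreal (exp (- X j \<omega>)) \<partial>M) = (\<integral>\<^sup>+\<omega>. ennreal (1 - c * indicator (E j) \<omega>) \<partial>M)"
      using bernoulli[OF j] by (intro nn_integral_cong) (force simp: E_def c_def indicator_def)
    also have "\<dots> = ennreal (\<integral>\<omega>. 1 - c * indicator (E j) \<omega> \<partial>M)"
    proof (rule nn_integral_eq_integral)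
      show "integrable M (\<lambda>\<omega>. 1 - c * indicator (E j) \<omega>)"
        using E[OF j] by (intro Bochner_Integration.integrable_diff integrable_mult_right
            integrable_real_indicator) (auto simp: emeasure_eq_measure)
    qed (use c in \<open>auto simp: indicator_def\<close>)
    also have "(\<integral>\<omega>. 1 - c * indicator (E j) \<omega> \<partial>M) = 1 - c * prob (E j)"
      using E[OF j] by (subst Bochner_Integration.integral_diff)
        (auto simp: prob_space emeasure_eq_measure)
    finally show ?thesis by simp
  qed
  have "prob {\<omega>\<in>space M. - s \<le> (\<Sum>j\<in>J. - X j \<omega>)} \<le> exp (- (- s)) * (\<Prod>j\<in>J. 1 - c * prob (E j))"
    using c by (intro prob_sum_ge_le_prod_mgf indep_vars_compose2[OF indep] \<open>finite J\<close> mgf)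
      (auto simp: mult_le_one)
  also have "(\<Prod>j\<in>J. 1 - c * prob (E j)) \<le> (\<Prod>j\<in>J. 1 - c * p)"
    using c p by (intro prod_mono) (auto simp: E_def mult_le_one intro: mult_left_mono)
  finally show ?thesis
    by (simp add: sum_negf c_def mult_left_mono)
qed

lemma (in prob_space) indep_vars_shift:
  assumes indep: "indep_vars (\<lambda>_. N) X {1..}"
  shows "indep_vars (\<lambda>_. N) (\<lambda>t. X (Suc t)) UNIV"
proof -
  have "indep_vars (\<lambda>t. Pi\<^sub>M {Suc t} (\<lambda>_. N)) (\<lambda>t \<omega>. restrict (\<lambda>i. X i \<omega>) {Suc t}) UNIV"
    by (rule indep_vars_restrict[OF indep]) (auto simp: disjoint_family_on_def)
  then have "indep_vars (\<lambda>_. N) (\<lambda>t \<omega>. restrict (\<lambda>i. X i \<omega>) {Suc t} (Suc t)) UNIV"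
    by (rule indep_vars_compose2) (simp add: measurable_component_singleton)
  then show ?thesis by simp
qed

lemma (in prob_space) indep_vars_block_prod:
  fixes W :: "nat \<Rightarrow> 'a \<Rightarrow> 'b" and g :: "'b \<Rightarrow> real"
  assumes indep: "indep_vars (\<lambda>_. N) W UNIV" and g: "g \<in> borel_measurable N"
  shows "indep_vars (\<lambda>_. borel) (\<lambda>j \<omega>. \<Prod>i<K. g (W (j * K + i) \<omega>)) UNIV"
proof -
  define block where "block j = {j * K..<j * K + K}" for j
  have "disjoint_family_on block UNIV"
    unfolding disjoint_family_on_def
  proof (intro ballI impI)
    fix j j' :: nat assume "j \<noteq> j'"
    have "x div K = i" if "x \<in> block i" for x i
      using that by (auto simp: block_def div_nat_eqI mult.commute)
    then show "block j \<inter> block j' = {}" using \<open>j \<noteq> j'\<close> by blast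
  qed
  then have "indep_vars (\<lambda>j. Pi\<^sub>M (block j) (\<lambda>_. N)) (\<lambda>j \<omega>. restrict (\<lambda>i. W i \<omega>) (block j)) UNIV"
    by (intro indep_vars_restrict[OF indep]) auto
  then have "indep_vars (\<lambda>_. borel)
      (\<lambda>j \<omega>. \<Prod>i<K. g (restrict (\<lambda>i. W i \<omega>) (block j) (j * K + i))) UNIV"
  proof (rule indep_vars_compose2)
    fix j
    have "(\<lambda>f. g (f (j * K + i))) \<in> borel_measurable (Pi\<^sub>M (block j) (\<lambda>_. N))" if "i < K" for i
      using that by (intro measurable_compose[OF measurable_component_singleton[where I="block j"] g])
        (auto simp: block_def)
    then show "(\<lambda>f. \<Prod>i<K. g (f (j * K + i))) \<in> borel_measurable (Pi\<^sub>M (block j) (\<lambda>_. N))"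
      by (intro borel_measurable_prod) auto
  qed
  then show ?thesis by (simp add: block_def)
qed

lemma (in prob_space) prob_all_in_ge_power:
  assumes indep: "indep_vars (\<lambda>_. N) W I" and "finite F" "F \<noteq> {}" "F \<subseteq> I" and G: "G \<in> sets N"
    and q: "0 \<le> q" "\<And>i. i \<in> F \<Longrightarrow> q \<le> prob {\<omega>\<in>space M. W i \<omega> \<in> G}"
  shows "q ^ card F \<le> prob {\<omega>\<in>space M. \<forall>i\<in>F. W i \<omega> \<in> G}"
proof -
  have "q ^ card F = (\<Prod>i\<in>F. q)" by simp
  also have "\<dots> \<le> (\<Prod>i\<in>F. prob (W i -` G \<inter> space M))"
    using q by (intro prod_mono) (auto simp: Int_def conj_commute)
  also have "\<dots> = prob (\<Inter>i\<in>F. W i -` G \<inter> space M)"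
    using assms by (intro indep_varsD[symmetric]) auto
  also have "(\<Inter>i\<in>F. W i -` G \<inter> space M) = {\<omega>\<in>space M. \<forall>i\<in>F. W i \<omega> \<in> G}"
    using \<open>F \<noteq> {}\<close> by auto
  finally show ?thesis .
qed

lemma (in prob_space) prob_few_good_blocks:
  fixes W :: "nat \<Rightarrow> 'a \<Rightarrow> 'b"
  assumes indep: "indep_vars (\<lambda>_. N) W UNIV" and G: "G \<in> sets N" and "1 \<le> K"
    and q: "0 \<le> q" "\<And>t. q \<le> prob {\<omega>\<in>space M. W t \<omega> \<in> G}"
  shows "prob {\<omega>\<in>space M. (\<Sum>j<m. \<Prod>i<K. indicator G (W (j * K + i) \<omega>)) \<le> s}
           \<le> exp s * (1 - (1 - exp (-1)) * q ^ K) ^ m"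
proof -
  have "q ^ K \<le> prob {\<omega>\<in>space M. (\<Prod>i<K. indicator G (W (j * K + i) \<omega>) :: real) = 1}" for j
  proof -
    have "q ^ card {j * K..<j * K + K} \<le> prob {\<omega>\<in>space M. \<forall>i\<in>{j * K..<j * K + K}. W i \<omega> \<in> G}"
      using \<open>1 \<le> K\<close> by (intro prob_all_in_ge_power[OF indep _ _ _ G q]) auto
    moreover have "(\<forall>i\<in>{j * K..<j * K + K}. W i \<omega> \<in> G) \<longleftrightarrow> (\<forall>i<K. W (j * K + i) \<omega> \<in> G)" for \<omega>
      by (auto, metis add_diff_inverse_nat add_less_cancel_left not_le)
    ultimately show ?thesis by (simp add: prod_indicator_lessThan)
  qed
  moreover have "indep_vars (\<lambda>_. borel) (\<lambda>j \<omega>. \<Prod>i<K. indicator G (W (j * K + i) \<omega>) :: real) {..<m}"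
    using indep_vars_block_prod[OF indep borel_measurable_indicator[OF G]]
    by (rule indep_vars_subset) auto
  ultimately show ?thesis
    by (subst card_lessThan[symmetric], intro prob_sum_indicators_le) (auto simp: prod_indicator_lessThan)
qed

lemma exp_overshoot_le_series:
  fixes x :: real and K :: nat
  shows "ennreal (exp (max (\<lceil>x\<rceil> - int K) 0))
           \<le> 1 + (\<Sum>j. ennreal (exp (real j + 1)) * indicator {real K + real j<..} x)"
proof (cases "\<lceil>x\<rceil> - int K \<le> 0")
  case False
  define j where "j = nat (\<lceil>x\<rceil> - int K - 1)"
  have j: "max (\<lceil>x\<rceil> - int K) 0 = int j + 1" using False by (simp add: j_def)
  then have "real K + real j < x" by linarith
  then have "ennreal (exp (max (\<lceil>x\<rceil> - int K) 0))
      = ennreal (exp (real j + 1)) * indicator {real K + real j<..} x"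
    using j by simp
  also have "\<dots> \<le> (\<Sum>j. ennreal (exp (real j + 1)) * indicator {real K + real j<..} x)"
    using sum_le_suminf[OF summableI, of "{j}"] by simp
  finally show ?thesis by (simp add: add_increasing)
qed simp

lemma overshoot_series_term_le:
  assumes "1 \<le> b * real K"
  shows "exp (real j + 1) * exp (- b * (real K + real j)\<^sup>2) \<le> exp 1 * exp (- b * (real K)\<^sup>2) * exp (-1) ^ j"
proof -
  have "0 \<le> b"
    using assms by (meson mult_nonneg_nonpos2 nle_le not_one_le_zero of_nat_0_le_iff order.trans)
  have "real j \<le> b * real K * real j" using assms by (simp add: mult_le_cancel_right1)
  moreover have "b * (real K + real j)\<^sup>2 = b * (real K)\<^sup>2 + 2 * (b * real K * real j) + b * (real j)\<^sup>2"
    by (simp add: power2_eq_square algebra_simps)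
  moreover have "0 \<le> b * (real j)\<^sup>2" using \<open>0 \<le> b\<close> by simp
  ultimately have "real j + 1 + - b * (real K + real j)\<^sup>2 \<le> 1 + - b * (real K)\<^sup>2 + real j * -1"
    by linarith
  then show ?thesis
    by (simp add: exp_of_nat_mult[symmetric] flip: exp_add)
qed

lemma exp_one_div_le_six: "exp 1 / (1 - exp (-1)) \<le> (6::real)"
proof -
  have "2 \<le> exp (1::real)" using exp_ge_add_one_self[of 1] by simp
  then have "(exp 1 - 2) * (exp 1 - 3) \<le> (0::real)" using exp_le by (intro mult_nonneg_nonpos) auto
  then have "exp 1 \<le> 6 * (1 - exp (-1::real))"
    using \<open>2 \<le> exp 1\<close> by (simp add: exp_minus field_simps algebra_simps)
  then show ?thesis by (simp add: divide_le_eq)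
qed

lemma (in prob_space) nn_integral_exp_overshoot_le:
  fixes f :: "'a \<Rightarrow> real"
  assumes [measurable]: "f \<in> borel_measurable M" and bK: "1 \<le> b * real K"
    and tail: "\<And>x. 0 < x \<Longrightarrow> prob {\<omega>\<in>space M. x < f \<omega>} \<le> exp (- b * x\<^sup>2)"
  shows "(\<integral>\<^sup>+\<omega>. ennreal (exp (max (\<lceil>f \<omega>\<rceil> - int K) 0)) \<partial>M) \<le> ennreal (1 + 6 * exp (- b * (real K)\<^sup>2))"
proof -
  define S where "S j = {\<omega>\<in>space M. real K + real j < f \<omega>}" for j
  have S [measurable]: "S j \<in> events" for j unfolding S_def by measurable
  define a where "a = exp 1 * exp (- b * (real K)\<^sup>2)"
  have "0 < K" using bK by (cases K) auto
  have "(\<integral>\<^sup>+\<omega>. ennreal (exp (max (\<lceil>f \<omega>\<rceil> - int K) 0)) \<partial>M)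
      \<le> (\<integral>\<^sup>+\<omega>. 1 + (\<Sum>j. ennreal (exp (real j + 1)) * indicator (S j) \<omega>) \<partial>M)"
    using exp_overshoot_le_series by (intro nn_integral_mono) (simp add: S_def indicator_def)
  also have "\<dots> = 1 + (\<Sum>j. ennreal (exp (real j + 1)) * emeasure M (S j))"
    by (simp add: nn_integral_add nn_integral_suminf nn_integral_cmult_indicator emeasure_space_1)
  also have "\<dots> \<le> 1 + (\<Sum>j. ennreal (a * exp (-1) ^ j))"
  proof (intro add_left_mono suminf_le summableI)
    fix j
    have "exp (real j + 1) * prob (S j) \<le> exp (real j + 1) * exp (- b * (real K + real j)\<^sup>2)"
      unfolding S_def using \<open>0 < K\<close> by (intro mult_left_mono tail) auto
    also have "\<dots> \<le> a * exp (-1) ^ j"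
      unfolding a_def by (rule overshoot_series_term_le[OF bK])
    finally show "ennreal (exp (real j + 1)) * emeasure M (S j) \<le> ennreal (a * exp (-1) ^ j)"
      by (simp add: emeasure_eq_measure ennreal_leI flip: ennreal_mult)
  qed
  also have "(\<Sum>j. ennreal (a * exp (-1) ^ j)) = ennreal (a / (1 - exp (-1)))"
  proof -
    have "(\<lambda>j. a * exp (-1) ^ j) sums (a * (1 / (1 - exp (-1))))"
      by (intro sums_mult geometric_sums) simp
    then have "(\<lambda>j. ennreal (a * exp (-1) ^ j)) sums ennreal (a / (1 - exp (-1)))"
      by (subst sums_ennreal) (auto simp: a_def)
    then show ?thesis by (rule sums_unique[symmetric])
  qed
  also have "1 + ennreal (a / (1 - exp (-1))) \<le> ennreal (1 + 6 * exp (- b * (real K)\<^sup>2))"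
  proof -
    have "exp 1 / (1 - exp (-1)) * exp (- b * (real K)\<^sup>2) \<le> 6 * exp (- b * (real K)\<^sup>2)"
      using exp_one_div_le_six by (intro mult_right_mono) auto
    then have "1 + a / (1 - exp (-1)) \<le> 1 + 6 * exp (- b * (real K)\<^sup>2)"
      by (simp add: a_def)
    moreover have "1 + ennreal (a / (1 - exp (-1))) = ennreal (1 + a / (1 - exp (-1)))"
      by (subst ennreal_plus) (auto simp: a_def)
    ultimately show ?thesis by (metis ennreal_leI)
  qed
  finally show ?thesis .
qed

lemma borel_measurable_components [measurable]:
  "(\<lambda>z::real \<times> real \<times> real \<times> real. fst z) \<in> borel_measurable borel"
  "(\<lambda>z::real \<times> real \<times> real \<times> real. fst (snd z)) \<in> borel_measurable borel"
  "(\<lambda>z::real \<times> real \<times> real \<times> real. fst (snd (snd z))) \<in> borel_measurable borel"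
  by (intro borel_measurable_continuous_onI continuous_intros)+

lemma borel_measurable_overshoot [measurable]:
  "(\<lambda>z. real_of_int (overshoot K z)) \<in> borel_measurable borel"
  unfolding overshoot_def by measurable

lemma (in prob_space) prob_large_overshoot_sum:
  fixes W :: "nat \<Rightarrow> 'a \<Rightarrow> real \<times> real \<times> real \<times> real"
  assumes indep: "indep_vars (\<lambda>_. borel) W UNIV" and bK: "1 \<le> b * real K"
    and tail: "\<And>t x. 0 < x \<Longrightarrow> prob {\<omega>\<in>space M. x < fst (snd (snd (W t \<omega>)))} \<le> exp (- b * x\<^sup>2)"
  shows "prob {\<omega>\<in>space M. s \<le> (\<Sum>t<n. real_of_int (overshoot K (W t \<omega>)))}
           \<le> exp (- s) * (1 + 6 * exp (- b * (real K)\<^sup>2)) ^ n"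
proof -
  have [measurable]: "W t \<in> borel_measurable M" for t
    using indep by (auto simp: indep_vars_def)
  have "prob {\<omega>\<in>space M. s \<le> (\<Sum>t<n. real_of_int (overshoot K (W t \<omega>)))}
      \<le> exp (- s) * (\<Prod>t<n. 1 + 6 * exp (- b * (real K)\<^sup>2))"
  proof (rule prob_sum_ge_le_prod_mgf)
    show "indep_vars (\<lambda>_. borel) (\<lambda>t \<omega>. real_of_int (overshoot K (W t \<omega>))) {..<n}"
      by (rule indep_vars_subset[OF indep_vars_compose2[OF indep]]) auto
    fix t
    show "(\<integral>\<^sup>+\<omega>. ennreal (exp (real_of_int (overshoot K (W t \<omega>)))) \<partial>M)
        \<le> ennreal (1 + 6 * exp (- b * (real K)\<^sup>2))"
      unfolding overshoot_def by (intro nn_integral_exp_overshoot_le[OF _ bK tail]) auto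
  qed auto
  then show ?thesis by simp
qed

lemma descent_region_borel [measurable]: "descent_region \<theta> \<in> sets borel"
proof -
  have "descent_region \<theta> = {z \<in> space borel. -pi/2 + \<theta> \<le> fst (snd z) \<and> fst (snd z) \<le> pi/2 - \<theta>
      \<and> 1 \<le> fst z * cos \<theta>}"
    by (auto simp: descent_region_def Tset_def)
  also have "\<dots> \<in> sets borel" by measurable
  finally show ?thesis .
qed

lemma (in prob_space) prob_tauM_ge_le:
  fixes X :: "nat \<Rightarrow> 'a \<Rightarrow> real \<times> real \<times> real \<times> real"
  assumes indep: "indep_vars (\<lambda>_. borel) X {1..}" and "0 < cos \<theta>" and "\<And>k \<omega>. 0 \<le> fst (X k \<omega>)"
    and q: "0 \<le> q" "\<And>k. 1 \<le> k \<Longrightarrow> q \<le> prob {\<omega>\<in>space M. X k \<omega> \<in> descent_region \<theta>}"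
    and tail: "\<And>k x. 1 \<le> k \<Longrightarrow> 0 < x \<Longrightarrow> prob {\<omega>\<in>space M. x < fst (snd (snd (X k \<omega>)))} \<le> exp (- b * x\<^sup>2)"
    and bK: "1 \<le> b * real K" and "m * K < n"
  shows "measure M {\<omega>\<in>space M. enat n \<le> tauM \<theta> (\<lambda>k. X k \<omega>)}
           \<le> exp s * (1 - (1 - exp (-1)) * q ^ K) ^ m + exp (- s) * (1 + 6 * exp (- b * (real K)\<^sup>2)) ^ (m * K)"
proof -
  have "1 \<le> K" using bK by (cases K) auto
  define W where "W t = X (Suc t)" for t
  have indep_W: "indep_vars (\<lambda>_. borel) W UNIV"
    unfolding W_def by (rule indep_vars_shift[OF indep])
  then have [measurable]: "W t \<in> borel_measurable M" for t
    by (auto simp: indep_vars_def)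
  define good where "good \<omega> = (\<Sum>j<m. \<Prod>i<K. indicator (descent_region \<theta>) (W (j * K + i) \<omega>) :: real)" for \<omega>
  define over where "over \<omega> = (\<Sum>t<m * K. real_of_int (overshoot K (W t \<omega>)))" for \<omega>
  have "{\<omega>\<in>space M. enat n \<le> tauM \<theta> (\<lambda>k. X k \<omega>)}
      \<subseteq> {\<omega>\<in>space M. good \<omega> \<le> s} \<union> {\<omega>\<in>space M. s \<le> over \<omega>}"
  proof safe
    fix \<omega> assume "enat n \<le> tauM \<theta> (\<lambda>k. X k \<omega>)" "\<not> s \<le> over \<omega>"
    then have "good \<omega> \<le> over \<omega>"
      unfolding good_def over_def W_def using assms(2,3) \<open>1 \<le> K\<close> \<open>m * K < n\<close>
      by (intro descent_blocks_le_overshoots_before_tauM) auto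
    then show "good \<omega> \<le> s" using \<open>\<not> s \<le> over \<omega>\<close> by simp
  qed
  then have "measure M {\<omega>\<in>space M. enat n \<le> tauM \<theta> (\<lambda>k. X k \<omega>)}
      \<le> measure M ({\<omega>\<in>space M. good \<omega> \<le> s} \<union> {\<omega>\<in>space M. s \<le> over \<omega>})"
    by (intro finite_measure_mono) (auto simp: good_def over_def)
  also have "\<dots> \<le> prob {\<omega>\<in>space M. good \<omega> \<le> s} + prob {\<omega>\<in>space M. s \<le> over \<omega>}"
    by (intro measure_Un_le) (auto simp: good_def over_def)
  also have "prob {\<omega>\<in>space M. good \<omega> \<le> s} \<le> exp s * (1 - (1 - exp (-1)) * q ^ K) ^ m"
    unfolding good_def using q \<open>1 \<le> K\<close>
    by (intro prob_few_good_blocks[OF indep_W]) (auto simp: W_def)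
  also have "prob {\<omega>\<in>space M. s \<le> over \<omega>} \<le> exp (- s) * (1 + 6 * exp (- b * (real K)\<^sup>2)) ^ (m * K)"
    unfolding over_def using tail by (intro prob_large_overshoot_sum[OF indep_W bK]) (auto simp: W_def)
  finally show ?thesis by simp
qed

lemma exists_block_length:
  fixes b q d :: real
  assumes "0 < b" "0 < q" "q \<le> 1" "0 < d"
  shows "\<exists>K::nat. 1 \<le> b * K \<and> real K * exp (- b * (real K)\<^sup>2) \<le> d * q ^ K"
proof -
  define A where "A = 1 - ln q"
  define B where "B = \<bar>ln d\<bar>"
  have "1 \<le> A" "0 \<le> B" using assms by (auto simp: A_def B_def)
  define K where "K = nat \<lceil>(A + B) / b\<rceil> + 1"
  have "1 \<le> K" by (simp add: K_def)
  have "(A + B) / b \<le> real K" unfolding K_def using real_nat_ceiling_ge[of "(A + B) / b"] by simp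
  then have bK: "A + B \<le> b * K" using assms by (simp add: divide_le_eq mult.commute)
  have "(A + B) * K \<le> (b * K) * K" using bK by (intro mult_right_mono) auto
  moreover have "B \<le> B * K" using \<open>0 \<le> B\<close> \<open>1 \<le> K\<close> by (simp add: mult_le_cancel_left1)
  ultimately have "real K - b * (real K)\<^sup>2 \<le> K * ln q + ln d"
    unfolding A_def B_def by (simp add: power2_eq_square algebra_simps)
  have "real K \<le> exp (real K)" using exp_ge_add_one_self[of "real K"] by linarith
  then have "real K * exp (- b * (real K)\<^sup>2) \<le> exp (real K) * exp (- b * (real K)\<^sup>2)"
    by (intro mult_right_mono) auto
  also have "\<dots> = exp (real K - b * (real K)\<^sup>2)" by (simp flip: exp_add)
  also have "\<dots> \<le> exp (K * ln q + ln d)" using \<open>real K - b * (real K)\<^sup>2 \<le> K * ln q + ln d\<close> by simp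
  also have "\<dots> = d * q ^ K" using assms by (simp add: exp_add exp_of_nat_mult)
  finally show ?thesis using bK \<open>1 \<le> A\<close> \<open>0 \<le> B\<close> by (intro exI[of _ K]) auto
qed

lemma Chernoff_terms_le:
  fixes u \<epsilon> :: real and K m n :: nat
  assumes u: "0 < u" "u \<le> 1" and \<epsilon>: "0 \<le> \<epsilon>" "\<epsilon> * K \<le> u / 4" and "0 < K" "n \<le> (m + 1) * K"
  shows "exp (u * m / 2) * (1 - u) ^ m + exp (- (u * m / 2)) * (1 + \<epsilon>) ^ (m * K)
           \<le> 2 * exp (u / 4) * exp (- (u / (4 * K)) * n)"
proof -
  have "(1 - u) ^ m \<le> exp (- u) ^ m"
    using u exp_ge_add_one_self[of "- u"] by (intro power_mono) auto
  then have "exp (u * m / 2) * (1 - u) ^ m \<le> exp (u * m / 2) * exp (- u * m)"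
    by (simp add: exp_of_nat_mult[symmetric] mult.commute)
  also have "\<dots> \<le> exp (- (u * m / 4))" using u by (simp flip: exp_add)
  finally have first: "exp (u * m / 2) * (1 - u) ^ m \<le> exp (- (u * m / 4))" .
  have "(1 + \<epsilon>) ^ (m * K) \<le> exp \<epsilon> ^ (m * K)"
    using \<epsilon> exp_ge_add_one_self[of \<epsilon>] by (intro power_mono) auto
  also have "\<dots> = exp (m * (\<epsilon> * K))" by (simp add: exp_of_nat_mult[symmetric] ac_simps)
  also have "\<dots> \<le> exp (m * (u / 4))"
    using \<epsilon> mult_left_mono[of "\<epsilon> * K" "u / 4" "real m"] by simp
  finally have "exp (- (u * m / 2)) * (1 + \<epsilon>) ^ (m * K) \<le> exp (- (u * m / 2)) * exp (m * (u / 4))"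
    by simp
  also have "\<dots> = exp (- (u * m / 4))" by (simp flip: exp_add)
  finally have second: "exp (- (u * m / 2)) * (1 + \<epsilon>) ^ (m * K) \<le> exp (- (u * m / 4))" .
  have "real n \<le> real ((m + 1) * K)" using \<open>n \<le> (m + 1) * K\<close> by (simp only: of_nat_le_iff)
  then have "real n / K \<le> m + 1" using \<open>0 < K\<close> by (simp add: divide_le_eq algebra_simps)
  then have "- (u * m / 4) \<le> u / 4 + - (u / (4 * K)) * n"
    using u mult_left_mono[of "real n / K" "m + 1" u] by (simp add: field_simps)
  then have "exp (- (u * m / 4)) \<le> exp (u / 4) * exp (- (u / (4 * K)) * n)"
    by (simp flip: exp_add)
  then show ?thesis using first second by linarith
qed

lemma (in prob_space) tauM_exponential_tail:
  fixes X :: "nat \<Rightarrow> 'a \<Rightarrow> real \<times> real \<times> real \<times> real"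
  assumes indep: "indep_vars (\<lambda>_. borel) X {1..}" and "0 < cos \<theta>" and "\<And>k \<omega>. 0 \<le> fst (X k \<omega>)"
    and q: "0 < q" "\<And>k. 1 \<le> k \<Longrightarrow> q \<le> prob {\<omega>\<in>space M. X k \<omega> \<in> descent_region \<theta>}"
    and b: "0 < b"
    and tail: "\<And>k x. 1 \<le> k \<Longrightarrow> 0 < x \<Longrightarrow> prob {\<omega>\<in>space M. x < fst (snd (snd (X k \<omega>)))} \<le> exp (- b * x\<^sup>2)"
  shows "\<exists>C>0. \<exists>c>0. \<forall>n::nat. n > 0 \<longrightarrow>
           measure M {\<omega>\<in>space M. tauM \<theta> (\<lambda>k. X k \<omega>) \<ge> enat n} \<le> C * exp (- c * real n)"
proof -
  define c0 :: real where "c0 = 1 - exp (-1)"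
  have c0: "0 < c0" "c0 \<le> 1" by (auto simp: c0_def)
  have "q \<le> 1" using q(2)[of 1] prob_le_1 by (meson order_trans order_refl)
  txt \<open>K is chosen so that the overshoot cost of a block, about 6 K exp (-b K^2), is small
    compared with the gain (1 - exp (-1)) q^K from descent blocks.\<close>
  obtain K where bK: "1 \<le> b * K" and K: "real K * exp (- b * (real K)\<^sup>2) \<le> c0 / 24 * q ^ K"
    using exists_block_length[OF b q(1) \<open>q \<le> 1\<close>, of "c0 / 24"] c0 by auto
  have "0 < K" using bK by (cases K) auto
  define u where "u = c0 * q ^ K"
  have u: "0 < u" "u \<le> 1"
    using c0 q \<open>q \<le> 1\<close> by (auto simp: u_def mult_le_one power_le_one)
  define \<epsilon> where "\<epsilon> = 6 * exp (- b * (real K)\<^sup>2)"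
  have \<epsilon>: "0 \<le> \<epsilon>" "\<epsilon> * K \<le> u / 4" using K by (auto simp: \<epsilon>_def u_def field_simps)
  show ?thesis
  proof (intro exI conjI allI impI)
    fix n :: nat assume "0 < n"
    define m where "m = (n - 1) div K"
    have "m * K < n"
      using \<open>0 < n\<close> div_times_less_eq_dividend[of "n - 1" K] unfolding m_def by linarith
    have "n \<le> (m + 1) * K"
      using \<open>0 < K\<close> unfolding m_def by (meson dec_less_imp_less_eq div_less_iff_less_mult less_add_one)
    show "measure M {\<omega>\<in>space M. tauM \<theta> (\<lambda>k. X k \<omega>) \<ge> enat n} \<le> 2 * exp (u / 4) * exp (- (u / (4 * K)) * n)"
      using prob_tauM_ge_le[OF indep assms(2,3) _ q(2) tail bK \<open>m * K < n\<close>, of "u * m / 2"]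
        Chernoff_terms_le[OF u \<epsilon> \<open>0 < K\<close> \<open>n \<le> (m + 1) * K\<close>] q(1)
      by (simp add: u_def \<epsilon>_def c0_def)
  qed (use u \<open>0 < K\<close> in auto)
qed

lemma nearest_mem_le:
  assumes fin: "\<forall>K. compact K \<longrightarrow> finite (S \<inter> K)" and "b \<in> S"
  shows "nearest S \<in> S \<and> cmod (nearest S) \<le> cmod b"
proof -
  have "finite (S \<inter> cball 0 (cmod b))" "S \<inter> cball 0 (cmod b) \<noteq> {}"
    using fin \<open>b \<in> S\<close> by auto
  from ex_is_arg_min_if_finite[OF this, of cmod]
  obtain v where "is_arg_min cmod (\<lambda>w. w \<in> S \<inter> cball 0 (cmod b)) v" ..
  then have v: "v \<in> S \<inter> cball 0 (cmod b)" "\<forall>w\<in>S \<inter> cball 0 (cmod b). cmod v \<le> cmod w"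
    by (auto simp: is_arg_min_linorder)
  have v_min: "\<forall>w\<in>S. cmod v \<le> cmod w"
  proof
    fix w assume "w \<in> S"
    show "cmod v \<le> cmod w"
      using v \<open>w \<in> S\<close> by (cases "cmod w \<le> cmod b") auto
  qed
  have "nearest S \<in> S \<and> (\<forall>w\<in>S. cmod (nearest S) \<le> cmod w)"
    unfolding nearest_def by (rule someI[of _ v]) (use v(1) v_min in blast)
  then show ?thesis using \<open>b \<in> S\<close> by blast
qed

lemma abs_Arg_le_of_abs_Im_le:
  assumes "0 < Re z" "\<bar>Im z\<bar> \<le> tan \<alpha> * Re z" "0 < \<alpha>" "\<alpha> < pi/2"
  shows "\<bar>Arg z\<bar> \<le> \<alpha>"
proof -
  have "\<bar>Im z / Re z\<bar> \<le> tan \<alpha>" using assms(1,2) by (simp add: divide_le_eq)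
  then have "arctan (- tan \<alpha>) \<le> arctan (Im z / Re z)" "arctan (Im z / Re z) \<le> arctan (tan \<alpha>)"
    by (simp_all only: arctan_le_iff abs_le_iff) linarith+
  then show ?thesis using assms by (simp add: arg_conv_arctan arctan_tan arctan_minus abs_le_iff)
qed

lemma measure_lborel_complex_box:
  assumes "a \<le> b" "c \<le> d"
  shows "measure lborel (cbox (Complex a c) (Complex b d)) = (b - a) * (d - c)"
proof -
  have "emeasure lborel (cbox (Complex a c) (Complex b d)) = ennreal ((b - a) * (d - c))"
    using assms by (simp add: emeasure_lborel_cbox_eq Basis_complex_def)
  then show ?thesis using assms by (simp add: measure_def)
qed

lemma ppp_finite_bounded:
  assumes "poisson_point_process M N lam" "\<omega> \<in> space M" "bounded A"
  shows "finite (N \<omega> \<inter> A)"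
proof -
  obtain x r where "A \<subseteq> cball x r" using \<open>bounded A\<close> bounded_subset_cball by blast
  moreover have "finite (N \<omega> \<inter> cball x r)"
    using assms(1,2) by (auto simp: poisson_point_process_def)
  ultimately show ?thesis by (meson Int_mono finite_subset order_refl)
qed

lemma ppp_void_prob:
  assumes P: "poisson_point_process M N lam" and A: "A \<in> sets borel" "bounded A"
  shows "{\<omega>\<in>space M. N \<omega> \<inter> A = {}} \<in> sets M"
    and "measure M {\<omega>\<in>space M. N \<omega> \<inter> A = {}} = exp (- (lam * measure lborel A))"
proof -
  have void: "{\<omega>\<in>space M. N \<omega> \<inter> A = {}} = (\<lambda>\<omega>. card (N \<omega> \<inter> A)) -` {0} \<inter> space M"
    using ppp_finite_bounded[OF P _ A(2)] by auto
  have "(\<lambda>\<omega>. card (N \<omega> \<inter> A)) \<in> measurable M (count_space UNIV)"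
    and "measure M {\<omega>\<in>space M. card (N \<omega> \<inter> A) = 0} = exp (- (lam * measure lborel A))"
    using P A unfolding poisson_point_process_def by auto
  then show "{\<omega>\<in>space M. N \<omega> \<inter> A = {}} \<in> sets M"
    and "measure M {\<omega>\<in>space M. N \<omega> \<inter> A = {}} = exp (- (lam * measure lborel A))"
    unfolding void by (auto simp: vimage_def Int_def conj_commute)
qed

lemma ppp_occupied_void_prob:
  assumes P: "poisson_point_process M N lam"
    and A: "A \<in> sets borel" "bounded A" and D: "D \<in> sets borel" "bounded D" and "A \<inter> D = {}"
  shows "measure M {\<omega>\<in>space M. N \<omega> \<inter> A \<noteq> {} \<and> N \<omega> \<inter> D = {}}
           = (1 - exp (- (lam * measure lborel A))) * exp (- (lam * measure lborel D))"
proof -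
  interpret prob_space M using P by (simp add: poisson_point_process_def)
  define region where "region i = (if i = (0::nat) then A else D)" for i
  define count where "count i \<omega> = card (N \<omega> \<inter> region i)" for i \<omega>
  have "disjoint_family_on region {0, 1}"
    using \<open>A \<inter> D = {}\<close> by (auto simp: disjoint_family_on_def region_def)
  then have "indep_vars (\<lambda>_. count_space UNIV) count {0, 1}"
    using P A D unfolding poisson_point_process_def count_def region_def by auto
  then have "prob (\<Inter>i\<in>{0, 1}. count i -` (if i = 0 then - {0} else {0}) \<inter> space M)
      = (\<Prod>i\<in>{0, 1}. prob (count i -` (if i = 0 then - {0} else {0}) \<inter> space M))"
    by (rule indep_varsD) auto
  then have indep: "prob (count 0 -` (- {0}) \<inter> space M \<inter> (count 1 -` {0} \<inter> space M))
      = prob (count 0 -` (- {0}) \<inter> space M) * prob (count 1 -` {0} \<inter> space M)"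
    by simp
  have fin: "finite (N \<omega> \<inter> A)" "finite (N \<omega> \<inter> D)" if "\<omega> \<in> space M" for \<omega>
    using ppp_finite_bounded[OF P that] A D by auto
  have occupied: "count 0 -` (- {0}) \<inter> space M = space M - {\<omega>\<in>space M. N \<omega> \<inter> A = {}}"
    and void: "count 1 -` {0} \<inter> space M = {\<omega>\<in>space M. N \<omega> \<inter> D = {}}"
    using fin by (auto simp: count_def region_def)
  have "measure M {\<omega>\<in>space M. N \<omega> \<inter> A \<noteq> {} \<and> N \<omega> \<inter> D = {}}
      = prob (count 0 -` (- {0}) \<inter> space M \<inter> (count 1 -` {0} \<inter> space M))"
    unfolding occupied void by (intro arg_cong[where f=prob]) auto
  also have "\<dots> = prob (count 0 -` (- {0}) \<inter> space M) * prob (count 1 -` {0} \<inter> space M)"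
    by (rule indep)
  also have "\<dots> = (1 - exp (- (lam * measure lborel A))) * exp (- (lam * measure lborel D))"
    unfolding occupied void using ppp_void_prob[OF P A] ppp_void_prob[OF P D]
    by (simp add: prob_compl)
  finally show ?thesis .
qed

lemma small_box_in_cone:
  assumes \<alpha>: "0 < \<alpha>" "\<alpha> < pi/2" and "0 < x" and u: "0 < u" "u \<le> 1" "u \<le> tan \<alpha>"
    and "z \<in> cbox (Complex (x/4) (- (x * u/4))) (Complex (x/2) (x * u/4))"
  shows "z \<in> cone \<alpha>" "cmod z \<le> x"
proof -
  have z: "x/4 \<le> Re z" "Re z \<le> x/2" "\<bar>Im z\<bar> \<le> u * (x/4)"
    using assms(7) by (auto simp: cbox_complex_eq abs_le_iff algebra_simps)
  have "u * (x/4) \<le> tan \<alpha> * Re z"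
    using z u \<open>0 < x\<close> by (intro mult_mono) auto
  then have "\<bar>Im z\<bar> \<le> tan \<alpha> * Re z" using z(3) by linarith
  then have "\<bar>Arg z\<bar> \<le> \<alpha>" using z \<open>0 < x\<close> \<alpha> by (intro abs_Arg_le_of_abs_Im_le) auto
  then show "z \<in> cone \<alpha>" using z \<open>0 < x\<close> by (auto simp: cone_def)
  show "cmod z \<le> x"
    using cmod_le[of z] z mult_left_le_one_le[of "x/4" u] u \<open>0 < x\<close> by linarith
qed

lemma ppp_polar_pair_upper_tail:
  assumes P: "poisson_point_process M N lam" and "0 < \<theta>" "\<theta> < pi/2" "0 < x"
  shows "measure M {\<omega>\<in>space M. x < fst (snd (snd (polar_pair \<theta> (N \<omega>))))}
           \<le> exp (- (lam * min 1 (tan (pi/2 - \<theta>)) / 8 * x\<^sup>2))"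
proof -
  interpret prob_space M using P by (simp add: poisson_point_process_def)
  define \<alpha> where "\<alpha> = pi/2 - \<theta>"
  define u where "u = min 1 (tan \<alpha>)"
  have \<alpha>: "0 < \<alpha>" "\<alpha> < pi/2" using assms by (auto simp: \<alpha>_def)
  then have u: "0 < u" "u \<le> 1" "u \<le> tan \<alpha>" by (auto simp: u_def tan_gt_zero)
  define B where "B = cbox (Complex (x/4) (- (x * u/4))) (Complex (x/2) (x * u/4))"
  have B: "B \<in> sets borel" "bounded B" by (auto simp: B_def)
  have B_cone: "z \<in> cone \<alpha>" "cmod z \<le> x" if "z \<in> B" for z
    using small_box_in_cone[OF \<alpha> \<open>0 < x\<close> u] that unfolding B_def by auto
  have "{\<omega>\<in>space M. x < fst (snd (snd (polar_pair \<theta> (N \<omega>))))} \<subseteq> {\<omega>\<in>space M. N \<omega> \<inter> B = {}}"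
  proof safe
    fix \<omega> b assume \<omega>: "\<omega> \<in> space M" and far: "x < fst (snd (snd (polar_pair \<theta> (N \<omega>))))"
      and "b \<in> N \<omega>" "b \<in> B"
    have "\<forall>K. compact K \<longrightarrow> finite (N \<omega> \<inter> K)"
      using P \<omega> by (simp add: poisson_point_process_def)
    then have "\<forall>K. compact K \<longrightarrow> finite (cone \<alpha> \<inter> N \<omega> \<inter> K)"
      by (auto intro: finite_subset[of _ "N \<omega> \<inter> _"])
    then have "cmod (nearest (cone \<alpha> \<inter> N \<omega>)) \<le> cmod b"
      using nearest_mem_le[of "cone \<alpha> \<inter> N \<omega>" b] B_cone \<open>b \<in> N \<omega>\<close> \<open>b \<in> B\<close> by blast
    then have "cmod (nearest (cone \<alpha> \<inter> N \<omega>)) \<le> x" using B_cone(2)[OF \<open>b \<in> B\<close>] by linarith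
    then show "b \<in> {}" using far by (simp add: polar_pair_def Let_def \<alpha>_def)
  qed
  then have "measure M {\<omega>\<in>space M. x < fst (snd (snd (polar_pair \<theta> (N \<omega>))))}
      \<le> measure M {\<omega>\<in>space M. N \<omega> \<inter> B = {}}"
    by (intro finite_measure_mono ppp_void_prob[OF P B])
  also have "\<dots> = exp (- (lam * measure lborel B))" by (rule ppp_void_prob[OF P B])
  also have "measure lborel B = u / 8 * x\<^sup>2"
    unfolding B_def using u \<open>0 < x\<close> by (subst measure_lborel_complex_box) (auto simp: power2_eq_square)
  finally show ?thesis by (simp add: u_def \<alpha>_def mult.assoc)
qed

definition descent_box :: "real \<Rightarrow> complex set" where
  "descent_box \<theta> = cbox (Complex (1 / cos \<theta>) 0) (Complex (1 / cos \<theta> + 1) (min 1 (tan (pi/2 - \<theta>) / cos \<theta>)))"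

lemma descent_box_cone:
  assumes "pi/4 \<le> \<theta>" "\<theta> < pi/2" "z \<in> descent_box \<theta>"
  shows "z \<in> cone \<theta>" "Arg z \<in> Tset \<theta>" "1 \<le> cmod z * cos \<theta>" "cmod z \<le> 1 / cos \<theta> + 2"
proof -
  have c: "0 < cos \<theta>" using assms by (intro cos_gt_zero_pi) auto
  have \<alpha>: "0 < pi/2 - \<theta>" "pi/2 - \<theta> < pi/2" "pi/2 - \<theta> \<le> \<theta>" using assms by auto
  have z: "1 / cos \<theta> \<le> Re z" "Re z \<le> 1 / cos \<theta> + 1" "0 \<le> Im z" "Im z \<le> 1"
    "Im z \<le> tan (pi/2 - \<theta>) / cos \<theta>"
    using assms(3) by (auto simp: descent_box_def cbox_complex_eq)
  have "0 < 1 / cos \<theta>" using c by simp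
  then have "0 < Re z" using z(1) by linarith
  have "\<bar>Im z\<bar> \<le> tan (pi/2 - \<theta>) * Re z"
    using z c \<alpha> tan_gt_zero[of "pi/2 - \<theta>"] mult_left_mono[of "1 / cos \<theta>" "Re z" "tan (pi/2 - \<theta>)"] by auto
  then have A: "\<bar>Arg z\<bar> \<le> pi/2 - \<theta>" using \<open>0 < Re z\<close> \<alpha> by (intro abs_Arg_le_of_abs_Im_le)
  then show "z \<in> cone \<theta>" "Arg z \<in> Tset \<theta>"
    using \<open>0 < Re z\<close> \<alpha> by (auto simp: cone_def Tset_def abs_le_iff)
  have "1 / cos \<theta> \<le> cmod z" using z abs_Re_le_cmod[of z] by linarith
  then show "1 \<le> cmod z * cos \<theta>" using c by (simp add: divide_le_eq)
  show "cmod z \<le> 1 / cos \<theta> + 2"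
    using cmod_le[of z] z \<open>0 < Re z\<close> by linarith
qed

lemma polar_pair_in_descent_region:
  assumes "pi/4 \<le> \<theta>" "\<theta> < pi/2" and fin: "\<forall>K. compact K \<longrightarrow> finite (P \<inter> K)"
    and "b \<in> P \<inter> descent_box \<theta>" and void: "P \<inter> (cball 0 (1 / cos \<theta> + 2) - descent_box \<theta>) = {}"
  shows "polar_pair \<theta> P \<in> descent_region \<theta>"
proof -
  define v where "v = nearest (cone \<theta> \<inter> P)"
  have "b \<in> cone \<theta> \<inter> P" using assms descent_box_cone(1) by blast
  moreover have "\<forall>K. compact K \<longrightarrow> finite (cone \<theta> \<inter> P \<inter> K)"
    using fin by (auto intro: finite_subset[of _ "P \<inter> _"])
  ultimately have v: "v \<in> P" "cmod v \<le> cmod b"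
    using nearest_mem_le unfolding v_def by blast+
  then have "v \<in> descent_box \<theta>"
    using void descent_box_cone(4)[OF assms(1,2), of b] \<open>b \<in> P \<inter> descent_box \<theta>\<close> by auto
  then show ?thesis
    using descent_box_cone[OF assms(1,2)] by (simp add: polar_pair_def Let_def descent_region_def v_def)
qed

definition descent_prob_bound :: "real \<Rightarrow> real \<Rightarrow> real" where
  "descent_prob_bound lam \<theta> = (1 - exp (- (lam * measure lborel (descent_box \<theta>))))
     * exp (- (lam * measure lborel (cball 0 (1 / cos \<theta> + 2) - descent_box \<theta>)))"

lemma descent_prob_bound_pos:
  assumes "0 < lam" "pi/4 \<le> \<theta>" "\<theta> < pi/2"
  shows "0 < descent_prob_bound lam \<theta>"
proof -
  have "0 < cos \<theta>" "0 < tan (pi/2 - \<theta>)" using assms by (auto intro: cos_gt_zero_pi tan_gt_zero)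
  then have "measure lborel (descent_box \<theta>) = min 1 (tan (pi/2 - \<theta>) / cos \<theta>)"
    unfolding descent_box_def by (subst measure_lborel_complex_box) auto
  then have "0 < measure lborel (descent_box \<theta>)"
    using \<open>0 < cos \<theta>\<close> \<open>0 < tan (pi/2 - \<theta>)\<close> by simp
  then show ?thesis using assms by (simp add: descent_prob_bound_def)
qed

lemma ppp_descent_prob_ge:
  assumes P: "poisson_point_process M N lam" and "pi/4 \<le> \<theta>" "\<theta> < pi/2"
    and meas: "(\<lambda>\<omega>. polar_pair \<theta> (N \<omega>)) \<in> borel_measurable M"
  shows "descent_prob_bound lam \<theta> \<le> measure M {\<omega>\<in>space M. polar_pair \<theta> (N \<omega>) \<in> descent_region \<theta>}"
proof -
  interpret prob_space M using P by (simp add: poisson_point_process_def)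
  define D where "D = cball 0 (1 / cos \<theta> + 2) - descent_box \<theta>"
  have box: "descent_box \<theta> \<in> sets borel" "bounded (descent_box \<theta>)" by (auto simp: descent_box_def)
  then have "D \<in> sets borel" "bounded D" by (auto simp: D_def)
  then have "descent_prob_bound lam \<theta> = measure M {\<omega>\<in>space M. N \<omega> \<inter> descent_box \<theta> \<noteq> {} \<and> N \<omega> \<inter> D = {}}"
    using ppp_occupied_void_prob[OF P box] by (simp add: descent_prob_bound_def D_def)
  also have "\<dots> \<le> measure M {\<omega>\<in>space M. polar_pair \<theta> (N \<omega>) \<in> descent_region \<theta>}"
  proof (rule finite_measure_mono)
    have "(\<lambda>\<omega>. polar_pair \<theta> (N \<omega>)) -` descent_region \<theta> \<inter> space M \<in> events"
      using meas descent_region_borel by (rule measurable_sets)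
    then show "{\<omega>\<in>space M. polar_pair \<theta> (N \<omega>) \<in> descent_region \<theta>} \<in> events"
      by (simp add: vimage_def Int_def conj_commute)
    show "{\<omega>\<in>space M. N \<omega> \<inter> descent_box \<theta> \<noteq> {} \<and> N \<omega> \<inter> D = {}}
        \<subseteq> {\<omega>\<in>space M. polar_pair \<theta> (N \<omega>) \<in> descent_region \<theta>}"
      using P assms(2,3) unfolding D_def
      by (auto simp: poisson_point_process_def intro!: polar_pair_in_descent_region)
  qed
  finally show ?thesis .
qed

theorem lemma4p3:
  fixes M :: "'a measure" and N :: "nat \<Rightarrow> 'a \<Rightarrow> complex set" and lam \<theta> :: real
  assumes "lam > 0" and "pi/4 < \<theta>" and "\<theta> < pi/2"
    and "\<And>n. n \<ge> 1 \<Longrightarrow> poisson_point_process M (N n) lam"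
    and "prob_space.indep_vars M (\<lambda>_. borel) (\<lambda>n \<omega>. polar_pair \<theta> (N n \<omega>)) {1..}"
  shows "\<exists>C>0. \<exists>c>0. \<forall>n::nat. n > 0 \<longrightarrow>
           measure M {\<omega>\<in>space M. tauM \<theta> (\<lambda>k. polar_pair \<theta> (N k \<omega>)) \<ge> enat n}
             \<le> C * exp (- c * real n)"
proof -
  interpret prob_space M using assms(4)[of 1] by (simp add: poisson_point_process_def)
  have rv: "(\<lambda>\<omega>. polar_pair \<theta> (N k \<omega>)) \<in> borel_measurable M" if "1 \<le> k" for k
    using assms(5) that by (auto simp: indep_vars_def)
  show ?thesis
  proof (rule tauM_exponential_tail[OF assms(5)])
    show "0 < cos \<theta>" using assms(2,3) by (intro cos_gt_zero_pi) auto
    show "0 \<le> fst (polar_pair \<theta> (N k \<omega>))" for k \<omega> by (simp add: polar_pair_def Let_def)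
    show "0 < descent_prob_bound lam \<theta>" using assms(1-3) by (intro descent_prob_bound_pos) auto
    show "descent_prob_bound lam \<theta> \<le> prob {\<omega>\<in>space M. polar_pair \<theta> (N k \<omega>) \<in> descent_region \<theta>}"
      if "1 \<le> k" for k
      using assms(2,3) by (intro ppp_descent_prob_ge assms(4) rv that) auto
    show "0 < lam * min 1 (tan (pi/2 - \<theta>)) / 8" using assms(1-3) by (simp add: tan_gt_zero)
    show "prob {\<omega>\<in>space M. x < fst (snd (snd (polar_pair \<theta> (N k \<omega>))))}
        \<le> exp (- (lam * min 1 (tan (pi/2 - \<theta>)) / 8) * x\<^sup>2)" if "1 \<le> k" "0 < x" for k x
      using ppp_polar_pair_upper_tail[OF assms(4)[OF that(1)] _ assms(3) that(2)] assms(2) pi_gt_zero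
      by (simp add: mult_ac)
  qed
qed

end
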